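(* Let $s\ge r\ge2$, let $Q$ be an $s$-vertex $r$-graph and let $\mathcal P$ be a $Q$-flat hereditary property of $r$-graphs. Then for every $n\ge s$ and every $H\in\mathcal P_n$, $$\mathcal N(Q,H)\le\pi(Q,\mathcal P)\,\frac{n^s}{s!},$$ and for every $p\ge1$, $$\lambda^{(p)}(Q,H)\le\pi(Q,\mathcal P)\,n^{s-s/p}.$$
   Context: An $r$-graph ($r\ge 2$) is a finite hypergraph all of whose edges have exactly $r$ vertices. For $I\subseteq V(H)$, $H[I]$ denotes the induced subhypergraph on $I$. For an $s$-vertex $r$-graph $Q$ and an $r$-graph $H$, $\mathcal N(Q,H)$ is the number of (not necessarily induced) subgraphs of $H$ isomorphic to $Q$. For an $n$-vertex $r$-graph $H$ with vertex set $[n]$ and $\mathbf x\in\mathbb R^n$, $P_{Q,H}(\mathbf x)=s!\sum_{\{i_1,\dots,i_s\}\in\binom{[n]}{s}}\mathcal N(Q,H[\{i_1,\dots,i_s\}])\,x_{i_1}\cdots x_{i_s}$, and for $p\ge1$, $\lambda^{(p)}(Q,H)=\max_{\|\mathbf x\|_p=1}P_{Q,H}(\mathbf x)$. A hereditary property $\mathcal P$ of $r$-graphs is a family of $r$-graphs closed under isomorphism and under taking induced subgraphs; as a standing assumption, whenever $H\in\mathcal P$, the disjoint union of $H$ with an isolated vertex is also in $\mathcal P$. $\mathcal P_n$ is the set of members of $\mathcal P$ with $n$ vertices. $ex(Q,\mathcal P_n)=\max\{\mathcal N(Q,H):H\in\mathcal P_n\}$ and $\pi(Q,\mathcal P)=\lim_{n\to\infty}ex(Q,\mathcal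 P_n)/\binom ns$ (this limit exists). $\lambda^{(p)}(Q,\mathcal P_n)=\max\{\lambda^{(p)}(Q,H):H\in\mathcal P_n\}$ and $\lambda^{(p)}(Q,\mathcal P)=\lim_{n\to\infty}\lambda^{(p)}(Q,\mathcal P_n)n^{s/p-s}$ (this limit exists). $\mathcal P$ is $Q$-flat if $\lambda^{(1)}(Q,\mathcal P)=\pi(Q,\mathcal P)$. *)

theory Defs
  imports Complex_Main
begin

type_synonym hgraph = "nat set \<times> nat set set"

definition rgraph :: "nat \<Rightarrow> hgraph \<Rightarrow> bool" where
  "rgraph r H \<longleftrightarrow> finite (fst H) \<and> (\<forall>e\<in>snd H. e \<subseteq> fst H \<and> card e = r)"

definition hiso :: "hgraph \<Rightarrow> hgraph \<Rightarrow> bool" where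
  "hiso G1 G2 \<longleftrightarrow> (\<exists>f. bij_betw f (fst G1) (fst G2) \<and> (\<lambda>e. f ` e) ` snd G1 = snd G2)"

definition induced :: "hgraph \<Rightarrow> nat set \<Rightarrow> hgraph" where
  "induced H I = (I, {e \<in> snd H. e \<subseteq> I})"

text \<open>Hereditary property of r-graphs, including the standing assumption that adding
  an isolated vertex keeps one inside the property.\<close>
definition hereditary :: "nat \<Rightarrow> hgraph set \<Rightarrow> bool" where
  "hereditary r P \<longleftrightarrow>
     (\<forall>H\<in>P. rgraph r H) \<and>
     (\<forall>H G. H \<in> P \<longrightarrow> hiso H G \<longrightarrow> G \<in> P) \<and>
     (\<forall>H\<in>P. \<forall>I. I \<subseteq> fst H \<longrightarrow> induced H I \<in> P) \<and>
     (\<forall>H\<in>P. \<forall>v. v \<notin> fst H \<longrightarrow> (insert v (fst H), snd H) \<in> P)"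

definition Pn :: "hgraph set \<Rightarrow> nat \<Rightarrow> hgraph set" where
  "Pn P n = {H \<in> P. card (fst H) = n}"

definition ncopies :: "hgraph \<Rightarrow> hgraph \<Rightarrow> nat" where
  "ncopies Q H = card {G. fst G \<subseteq> fst H \<and> snd G \<subseteq> snd H \<and> (\<forall>e\<in>snd G. e \<subseteq> fst G) \<and> hiso G Q}"

definition polyQ :: "hgraph \<Rightarrow> hgraph \<Rightarrow> (nat \<Rightarrow> real) \<Rightarrow> real" where
  "polyQ Q H x = fact (card (fst Q)) *
     (\<Sum>I\<in>{I. I \<subseteq> fst H \<and> card I = card (fst Q)}. real (ncopies Q (induced H I)) * (\<Prod>i\<in>I. x i))"

definition lam :: "real \<Rightarrow> hgraph \<Rightarrow> hgraph \<Rightarrow> real" where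
  "lam p Q H = Sup {polyQ Q H x | x. (\<Sum>i\<in>fst H. \<bar>x i\<bar> powr p) powr (1 / p) = 1}"

definition exQ :: "hgraph \<Rightarrow> hgraph set \<Rightarrow> nat \<Rightarrow> real" where
  "exQ Q P n = Sup {real (ncopies Q H) | H. H \<in> Pn P n}"

definition piQ :: "hgraph \<Rightarrow> hgraph set \<Rightarrow> real" where
  "piQ Q P = lim (\<lambda>n. exQ Q P n / real (n choose card (fst Q)))"

definition lamPn :: "real \<Rightarrow> hgraph \<Rightarrow> hgraph set \<Rightarrow> nat \<Rightarrow> real" where
  "lamPn p Q P n = Sup {lam p Q H | H. H \<in> Pn P n}"

definition lamP :: "real \<Rightarrow> hgraph \<Rightarrow> hgraph set \<Rightarrow> real" where
  "lamP p Q P = lim (\<lambda>n. lamPn p Q P n * real n powr (real (card (fst Q)) / p - real (card (fst Q))))"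

definition flat :: "hgraph \<Rightarrow> hgraph set \<Rightarrow> bool" where
  "flat Q P \<longleftrightarrow> lamP 1 Q P = piQ Q P"

end

theory Submission
  imports Defs "HOL-Analysis.Analysis"
begin

(* Flatness yields lam_1(Q,H) <= pi(Q,P) for every H in P: adding an isolated vertex does not
   decrease lam_1, so lam_1(Q,P_n) is nondecreasing in n; it is also bounded, so its limit
   lam_1(Q,P) = pi(Q,P) dominates every term.  Evaluating P_{Q,H} at the uniform vector
   (1/n,...,1/n) gives s! N(Q,H) / n^s <= lam_1(Q,H).  For p >= 1 the power-mean inequality
   |x|_1 <= n^(1-1/p) |x|_p and the homogeneity of P_{Q,H} of degree s give
   lam_p(Q,H) <= n^(s-s/p) lam_1(Q,H). *)

lemma hereditary_finite:
  assumes "hereditary r P" "H \<in> P"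
  shows "finite (fst H)"
  using assms by (auto simp: hereditary_def rgraph_def)

lemma hereditary_add_vertex:
  assumes "hereditary r P" "H \<in> Pn P n"
  obtains v where "v \<notin> fst H" "(insert v (fst H), snd H) \<in> Pn P (Suc n)"
proof -
  have fin: "finite (fst H)" using hereditary_finite[OF assms(1)] assms(2) by (simp add: Pn_def)
  obtain v where v: "v \<notin> fst H" using ex_new_if_finite[OF infinite_UNIV_nat fin] by auto
  then have "(insert v (fst H), snd H) \<in> Pn P (Suc n)"
    using assms fin by (auto simp: hereditary_def Pn_def)
  with v show thesis by (rule that)
qed

lemma Pn_nonempty:
  assumes "hereditary r P" "H \<in> P" "card (fst H) \<le> n"
  shows "Pn P n \<noteq> {}"
  using assms(3)
proof (induction n rule: dec_induct)
  case base
  have "H \<in> Pn P (card (fst H))" using assms(2) by (simp add: Pn_def)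
  then show ?case by blast
next
  case (step n)
  then obtain G where "G \<in> Pn P n" by blast
  with assms(1) show ?case by (rule hereditary_add_vertex) blast
qed

lemma hiso_card_eq: "hiso G Q \<Longrightarrow> card (fst G) = card (fst Q)"
  unfolding hiso_def by (auto intro: bij_betw_same_card)

lemma finite_subsets_card: "finite V \<Longrightarrow> finite {I. I \<subseteq> V \<and> card I = k}"
  by (rule finite_subset[of _ "Pow V"]) auto

lemma ncopies_induced_le:
  assumes "finite I"
  shows "ncopies Q (induced H I) \<le> 2 ^ card I * 2 ^ 2 ^ card I"
proof -
  have "ncopies Q (induced H I) \<le> card (Pow I \<times> Pow (Pow I))"
    unfolding ncopies_def using assms by (intro card_mono) (auto simp: induced_def)
  then show ?thesis using assms by (simp add: card_cartesian_product card_Pow)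
qed

lemma ncopies_eq_sum_induced:
  assumes "finite (fst H)"
  shows "ncopies Q H =
    (\<Sum>I\<in>{I. I \<subseteq> fst H \<and> card I = card (fst Q)}. ncopies Q (induced H I))"
proof -
  define C where
    "C H' = {G. fst G \<subseteq> fst H' \<and> snd G \<subseteq> snd H' \<and> (\<forall>e\<in>snd G. e \<subseteq> fst G) \<and> hiso G Q}" for H'
  define Is where "Is = {I. I \<subseteq> fst H \<and> card I = card (fst Q)}"
  have finI: "finite I" if "I \<in> Is" for I
    using that by (intro rev_finite_subset[OF assms]) (simp add: Is_def)
  have finC: "finite (C (induced H I))" if "I \<in> Is" for I
  proof (rule finite_subset)
    show "C (induced H I) \<subseteq> Pow I \<times> Pow (Pow I)" unfolding C_def induced_def by auto
  qed (simp add: finI[OF that])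
  have vertices: "fst G = I" if "I \<in> Is" "G \<in> C (induced H I)" for I G
  proof (rule card_subset_eq[OF finI[OF that(1)]])
    show "fst G \<subseteq> I" using that(2) unfolding C_def induced_def by auto
    show "card (fst G) = card I" using that hiso_card_eq[of G Q] unfolding C_def Is_def by simp
  qed
  have "C H = (\<Union>I\<in>Is. C (induced H I))"
  proof
    show "C H \<subseteq> (\<Union>I\<in>Is. C (induced H I))"
    proof
      fix G assume "G \<in> C H"
      then have "fst G \<in> Is" "G \<in> C (induced H (fst G))"
        unfolding C_def Is_def induced_def using hiso_card_eq[of G Q] by auto
      then show "G \<in> (\<Union>I\<in>Is. C (induced H I))" by blast
    qed
    show "(\<Union>I\<in>Is. C (induced H I)) \<subseteq> C H" unfolding C_def Is_def induced_def by auto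
  qed
  moreover have "finite Is" unfolding Is_def using assms by (rule finite_subsets_card)
  moreover have "C (induced H I) \<inter> C (induced H J) = {}"
    if "I \<in> Is" "J \<in> Is" "I \<noteq> J" for I J
    using that vertices by blast
  ultimately have "card (C H) = (\<Sum>I\<in>Is. card (C (induced H I)))"
    using finC by (simp add: card_UN_disjoint)
  then show ?thesis by (simp add: ncopies_def C_def Is_def)
qed

lemma sum_subsets_prod_le_exp:
  fixes a :: "'a \<Rightarrow> real"
  assumes "finite V" "\<And>i. i \<in> V \<Longrightarrow> 0 \<le> a i"
  shows "(\<Sum>I\<in>{I. I \<subseteq> V \<and> card I = k}. \<Prod>i\<in>I. a i) \<le> exp (\<Sum>i\<in>V. a i)"
proof -
  have "(\<Sum>I\<in>{I. I \<subseteq> V \<and> card I = k}. \<Prod>i\<in>I. a i) \<le> (\<Sum>I\<in>Pow V. \<Prod>i\<in>I. a i)"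
    using assms by (intro sum_mono2) (auto intro!: prod_nonneg)
  also have "\<dots> = (\<Prod>i\<in>V. a i + 1)"
    using prod_add[OF assms(1), of a "\<lambda>_. 1"] by simp
  also have "\<dots> \<le> (\<Prod>i\<in>V. exp (a i))"
    using assms by (intro prod_mono) (auto simp: add.commute exp_ge_add_one_self)
  also have "\<dots> = exp (\<Sum>i\<in>V. a i)"
    using assms(1) by (simp add: exp_sum)
  finally show ?thesis .
qed

lemma sum_le_card_powr:
  fixes a :: "'a \<Rightarrow> real"
  assumes fin: "finite V" and nonneg: "\<And>i. i \<in> V \<Longrightarrow> 0 \<le> a i" and p: "1 \<le> p"
    and normalized: "(\<Sum>i\<in>V. a i powr p) = 1"
  shows "(\<Sum>i\<in>V. a i) \<le> real (card V) powr (1 - 1 / p)"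
proof -
  define S where "S = {i\<in>V. 0 < a i}"
  define k where "k = real (card S)"
  have SV: "S \<subseteq> V" by (auto simp: S_def)
  have zero: "a i = 0" if "i \<in> V - S" for i
    using that nonneg by (force simp: S_def)
  have sum_S: "(\<Sum>i\<in>V. a i) = (\<Sum>i\<in>S. a i)"
    using zero by (intro sum.mono_neutral_right[OF fin SV]) auto
  have sum_powr_S: "(\<Sum>i\<in>S. a i powr p) = 1"
    using zero normalized by (subst sum.mono_neutral_right[OF fin SV, symmetric]) auto
  then have "S \<noteq> {}" by auto
  then have k: "0 < k" using fin SV by (simp add: k_def card_gt_0_iff finite_subset)
  \<comment> \<open>Jensen for \<open>x powr p\<close>, convex only on \<open>{0<..}\<close>: average uniformly over the support\<close>
  have "(\<Sum>i\<in>S. (1 / k) *\<^sub>R a i) powr p \<le> (\<Sum>i\<in>S. (1 / k) * a i powr p)"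
    using k fin SV \<open>S \<noteq> {}\<close>
    by (intro convex_on_sum[OF _ _ powr_convex[OF p]]) (auto simp: k_def S_def finite_subset)
  then have "((\<Sum>i\<in>S. a i) / k) powr p \<le> 1 / k"
    by (simp add: sum_divide_distrib[symmetric] sum_distrib_left[symmetric] sum_powr_S)
  moreover have "0 \<le> (\<Sum>i\<in>S. a i)"
    using nonneg SV by (intro sum_nonneg) auto
  ultimately have "(\<Sum>i\<in>S. a i) / k \<le> (1 / k) powr (1 / p)"
    using p k powr_mono2[of "1 / p" "((\<Sum>i\<in>S. a i) / k) powr p" "1 / k"]
    by (simp add: powr_powr abs_of_nonneg)
  then have "(\<Sum>i\<in>S. a i) \<le> k powr (1 - 1 / p)"
    using k by (simp add: field_simps powr_diff powr_divide)
  also have "\<dots> \<le> real (card V) powr (1 - 1 / p)"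
    using p card_mono[OF fin SV] by (intro powr_mono2) (auto simp: k_def field_simps)
  finally show ?thesis by (simp add: sum_S)
qed

lemma polyQ_le_polyQ_abs: "polyQ Q H x \<le> polyQ Q H (\<lambda>i. \<bar>x i\<bar>)"
  unfolding polyQ_def
proof (intro mult_left_mono sum_mono)
  fix I
  have "(\<Prod>i\<in>I. x i) \<le> \<bar>\<Prod>i\<in>I. x i\<bar>" by simp
  then show "(\<Prod>i\<in>I. x i) \<le> (\<Prod>i\<in>I. \<bar>x i\<bar>)" by (simp add: abs_prod)
qed auto

lemma polyQ_nonneg: "(\<And>i. 0 \<le> x i) \<Longrightarrow> 0 \<le> polyQ Q H x"
  unfolding polyQ_def by (intro mult_nonneg_nonneg sum_nonneg prod_nonneg) auto

lemma polyQ_scale: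
  assumes "t \<noteq> 0"
  shows "polyQ Q H x = t ^ card (fst Q) * polyQ Q H (\<lambda>i. x i / t)"
proof -
  have "(\<Prod>i\<in>I. x i) = t ^ card (fst Q) * (\<Prod>i\<in>I. x i / t)" if "card I = card (fst Q)" for I
    using assms that by (simp add: prod_dividef)
  then show ?thesis
    unfolding polyQ_def sum_distrib_left by (auto intro!: sum.cong)
qed

lemma polyQ_const:
  fixes c :: real
  assumes "finite (fst H)"
  shows "polyQ Q H (\<lambda>_. c) = fact (card (fst Q)) * ncopies Q H * c ^ card (fst Q)"
  unfolding polyQ_def ncopies_eq_sum_induced[OF assms] of_nat_sum
  by (simp add: sum_distrib_right mult.assoc)

lemma polyQ_add_isolated_vertex:
  assumes "finite (fst H)" "v \<notin> fst H"
  shows "polyQ Q (insert v (fst H), snd H) (x(v := 0)) = polyQ Q H x"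
proof -
  let ?s = "card (fst Q)"
  let ?H' = "(insert v (fst H), snd H)"
  let ?term = "\<lambda>I. real (ncopies Q (induced ?H' I)) * (\<Prod>i\<in>I. (x(v := 0)) i)"
  have fin: "finite (insert v (fst H))" using assms(1) by simp
  have "?term I = 0" if "I \<subseteq> insert v (fst H)" "\<not> I \<subseteq> fst H" for I
  proof -
    have "v \<in> I" using that by blast
    then have "(\<Prod>i\<in>I. (x(v := 0)) i) = 0"
      using rev_finite_subset[OF fin that(1)] by (intro prod_zero) auto
    then show ?thesis by simp
  qed
  then have "(\<Sum>I\<in>{I. I \<subseteq> insert v (fst H) \<and> card I = ?s}. ?term I)
      = (\<Sum>I\<in>{I. I \<subseteq> fst H \<and> card I = ?s}. ?term I)"
    by (intro sum.mono_neutral_right finite_subsets_card fin) blast+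
  also have "\<dots> =
      (\<Sum>I\<in>{I. I \<subseteq> fst H \<and> card I = ?s}. real (ncopies Q (induced H I)) * (\<Prod>i\<in>I. x i))"
    using assms(2) by (intro sum.cong refl arg_cong2[where f = "(*)"] prod.cong)
      (auto simp: induced_def)
  finally show ?thesis by (simp add: polyQ_def)
qed

(* A crude bound, but independent of H: that is all the monotone-limit argument needs. *)
definition simplex_bound :: "nat \<Rightarrow> real" where
  "simplex_bound s = fact s * (2 ^ s * 2 ^ 2 ^ s) * exp 1"

lemma polyQ_le_simplex_bound:
  assumes fin: "finite (fst H)" and simplex: "(\<Sum>i\<in>fst H. \<bar>x i\<bar>) = 1"
  shows "polyQ Q H x \<le> simplex_bound (card (fst Q))"
proof -
  let ?s = "card (fst Q)"
  let ?Is = "{I. I \<subseteq> fst H \<and> card I = ?s}"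
  have "polyQ Q H x \<le> polyQ Q H (\<lambda>i. \<bar>x i\<bar>)" by (rule polyQ_le_polyQ_abs)
  also have "\<dots> \<le> fact ?s * (\<Sum>I\<in>?Is. (2 ^ ?s * 2 ^ 2 ^ ?s) * (\<Prod>i\<in>I. \<bar>x i\<bar>))"
    unfolding polyQ_def
  proof (intro mult_left_mono sum_mono mult_right_mono)
    fix I assume "I \<in> ?Is"
    then have "finite I" "card I = ?s" using rev_finite_subset[OF fin] by auto
    then show "real (ncopies Q (induced H I)) \<le> 2 ^ ?s * 2 ^ 2 ^ ?s"
      using of_nat_mono[OF ncopies_induced_le[of I Q H]] by simp
  qed (auto intro: prod_nonneg)
  also have "\<dots> \<le> fact ?s * (2 ^ ?s * 2 ^ 2 ^ ?s) * exp (\<Sum>i\<in>fst H. \<bar>x i\<bar>)"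
    unfolding sum_distrib_left[symmetric] mult.assoc
    by (intro mult_left_mono sum_subsets_prod_le_exp fin) auto
  finally show ?thesis by (simp add: simplex simplex_bound_def)
qed

lemma lam_eq_Sup_sum_powr:
  assumes "0 < p"
  shows "lam p Q H = Sup {polyQ Q H x | x. (\<Sum>i\<in>fst H. \<bar>x i\<bar> powr p) = 1}"
proof -
  have "T powr (1 / p) = 1 \<longleftrightarrow> T = 1" if "0 \<le> T" for T :: real
  proof
    assume root: "T powr (1 / p) = 1"
    then have "T \<noteq> 0" by auto
    then have "(T powr (1 / p)) powr p = T"
      using assms that by (simp add: powr_powr)
    with root show "T = 1" by simp
  qed simp
  then show ?thesis unfolding lam_def by (simp add: sum_nonneg)
qed

lemma lam_one_eq_Sup: "lam 1 Q H = Sup {polyQ Q H x | x. (\<Sum>i\<in>fst H. \<bar>x i\<bar>) = 1}"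
  by (simp add: lam_eq_Sup_sum_powr)

lemma exists_unit_vector:
  assumes "finite V" "v \<in> V"
  shows "\<exists>x :: 'a \<Rightarrow> real. (\<Sum>i\<in>V. \<bar>x i\<bar> powr p) = 1"
proof
  have "(\<Sum>i\<in>V. \<bar>(if i = v then 1 else 0 :: real)\<bar> powr p) = (\<Sum>i\<in>V. if i = v then 1 else 0)"
    by (rule sum.cong) auto
  then show "(\<Sum>i\<in>V. \<bar>(if i = v then 1 else 0 :: real)\<bar> powr p) = 1"
    using assms by simp
qed

lemma lam_one_upper:
  assumes "finite (fst H)" "(\<Sum>i\<in>fst H. \<bar>x i\<bar>) = 1"
  shows "polyQ Q H x \<le> lam 1 Q H"
  unfolding lam_one_eq_Sup
proof (rule cSup_upper)
  show "bdd_above {polyQ Q H x | x. (\<Sum>i\<in>fst H. \<bar>x i\<bar>) = 1}"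
    using polyQ_le_simplex_bound[OF assms(1), where Q = Q] by (auto intro!: bdd_aboveI)
qed (use assms(2) in blast)

lemma lam_one_le_simplex_bound:
  assumes "finite (fst H)" "fst H \<noteq> {}"
  shows "lam 1 Q H \<le> simplex_bound (card (fst Q))"
  unfolding lam_one_eq_Sup
proof (rule cSup_least)
  show "{polyQ Q H x | x. (\<Sum>i\<in>fst H. \<bar>x i\<bar>) = 1} \<noteq> {}"
    using assms exists_unit_vector[of "fst H" _ 1] by auto
qed (use polyQ_le_simplex_bound[OF assms(1), where Q = Q] in blast)

lemma lam_one_add_isolated_vertex:
  assumes fin: "finite (fst H)" and "fst H \<noteq> {}" and v: "v \<notin> fst H"
  shows "lam 1 Q H \<le> lam 1 Q (insert v (fst H), snd H)"
  unfolding lam_one_eq_Sup[of Q H]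
proof (rule cSup_least)
  show "{polyQ Q H x | x. (\<Sum>i\<in>fst H. \<bar>x i\<bar>) = 1} \<noteq> {}"
    using assms exists_unit_vector[of "fst H" _ 1] by auto
next
  fix y assume "y \<in> {polyQ Q H x | x. (\<Sum>i\<in>fst H. \<bar>x i\<bar>) = 1}"
  then obtain x where y: "y = polyQ Q H x" and simplex: "(\<Sum>i\<in>fst H. \<bar>x i\<bar>) = 1" by blast
  have "(\<Sum>i\<in>fst H. \<bar>(x(v := 0)) i\<bar>) = 1"
    using simplex v by (metis (no_types, lifting) fun_upd_other sum.cong)
  then have "(\<Sum>i\<in>insert v (fst H). \<bar>(x(v := 0)) i\<bar>) = 1"
    using fin v by simp
  then have "polyQ Q (insert v (fst H), snd H) (x(v := 0)) \<le> lam 1 Q (insert v (fst H), snd H)"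
    using fin by (intro lam_one_upper) auto
  then show "y \<le> lam 1 Q (insert v (fst H), snd H)"
    by (simp add: y polyQ_add_isolated_vertex[OF fin v])
qed

lemma fact_mult_ncopies_le_lam_one:
  assumes fin: "finite (fst H)" and "fst H \<noteq> {}"
  shows "fact (card (fst Q)) * ncopies Q H \<le> lam 1 Q H * real (card (fst H)) ^ card (fst Q)"
proof -
  let ?n = "real (card (fst H))"
  have n: "0 < ?n" using assms by (simp add: card_gt_0_iff)
  have "(\<Sum>i\<in>fst H. \<bar>1 / ?n\<bar>) = 1" using n by simp
  then have "polyQ Q H (\<lambda>_. 1 / ?n) \<le> lam 1 Q H" by (rule lam_one_upper[OF fin])
  then show ?thesis
    using n by (simp add: polyQ_const[OF fin] power_divide field_simps)
qed

lemma lam_le_lam_one: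
  assumes fin: "finite (fst H)" and nonempty: "fst H \<noteq> {}" and p: "1 \<le> p"
  shows "lam p Q H \<le>
    lam 1 Q H * real (card (fst H)) powr (real (card (fst Q)) - real (card (fst Q)) / p)"
  unfolding lam_eq_Sup_sum_powr[of p, OF less_le_trans[OF zero_less_one p]]
proof (rule cSup_least)
  show "{polyQ Q H x | x. (\<Sum>i\<in>fst H. \<bar>x i\<bar> powr p) = 1} \<noteq> {}"
    using fin nonempty exists_unit_vector[of "fst H" _ p] by auto
next
  let ?s = "card (fst Q)"
  let ?n = "real (card (fst H))"
  fix y assume "y \<in> {polyQ Q H x | x. (\<Sum>i\<in>fst H. \<bar>x i\<bar> powr p) = 1}"
  then obtain x where y: "y = polyQ Q H x" and sphere: "(\<Sum>i\<in>fst H. \<bar>x i\<bar> powr p) = 1"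
    by blast
  define t where "t = (\<Sum>i\<in>fst H. \<bar>x i\<bar>)"
  have t_le: "t \<le> ?n powr (1 - 1 / p)"
    unfolding t_def by (rule sum_le_card_powr[OF fin _ p sphere]) simp
  have "t \<noteq> 0"
  proof
    assume "t = 0"
    then have "\<forall>i\<in>fst H. x i = 0" using fin by (simp add: t_def sum_nonneg_eq_0_iff)
    then show False using sphere by simp
  qed
  then have t: "0 < t" by (simp add: t_def order.not_eq_order_implies_strict sum_nonneg)
  have "(\<Sum>i\<in>fst H. \<bar>\<bar>x i\<bar> / t\<bar>) = 1"
    using t by (simp add: t_def sum_divide_distrib[symmetric])
  then have normalized: "polyQ Q H (\<lambda>i. \<bar>x i\<bar> / t) \<le> lam 1 Q H"
    by (rule lam_one_upper[OF fin])
  have nonneg: "0 \<le> polyQ Q H (\<lambda>i. \<bar>x i\<bar> / t)"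
    using t by (intro polyQ_nonneg) simp
  have "y \<le> polyQ Q H (\<lambda>i. \<bar>x i\<bar>)"
    unfolding y by (rule polyQ_le_polyQ_abs)
  also have "\<dots> = t ^ ?s * polyQ Q H (\<lambda>i. \<bar>x i\<bar> / t)"
    using \<open>t \<noteq> 0\<close> by (rule polyQ_scale)
  also have "\<dots> \<le> (?n powr (1 - 1 / p)) ^ ?s * lam 1 Q H"
    using normalized nonneg t t_le by (intro mult_mono power_mono) auto
  also have "(?n powr (1 - 1 / p)) ^ ?s = ?n powr (real ?s - real ?s / p)"
    using fin nonempty by (simp add: powr_power right_diff_distrib card_gt_0_iff)
  finally show "y \<le> lam 1 Q H * ?n powr (real ?s - real ?s / p)"
    by (simp add: mult.commute)
qed

lemma lam_one_le_simplex_bound_Pn: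
  assumes "hereditary r P" "G \<in> Pn P n" "1 \<le> n"
  shows "lam 1 Q G \<le> simplex_bound (card (fst Q))"
proof (rule lam_one_le_simplex_bound)
  have "G \<in> P" "card (fst G) = n" using assms(2) by (simp_all add: Pn_def)
  then show "finite (fst G)" "fst G \<noteq> {}"
    using hereditary_finite[OF assms(1)] assms(3) by auto
qed

lemma lam_one_le_lamPn_one:
  assumes "hereditary r P" "G \<in> Pn P n" "1 \<le> n"
  shows "lam 1 Q G \<le> lamPn 1 Q P n"
  unfolding lamPn_def
proof (rule cSup_upper)
  show "bdd_above {lam 1 Q G | G. G \<in> Pn P n}"
    using lam_one_le_simplex_bound_Pn[OF assms(1) _ assms(3), where Q = Q]
    by (auto intro!: bdd_aboveI)
qed (use assms(2) in blast)

lemma lamPn_one_le_simplex_bound: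
  assumes "hereditary r P" "Pn P n \<noteq> {}" "1 \<le> n"
  shows "lamPn 1 Q P n \<le> simplex_bound (card (fst Q))"
  unfolding lamPn_def
  using assms lam_one_le_simplex_bound_Pn[OF assms(1) _ assms(3), where Q = Q]
  by (intro cSup_least) auto

lemma lamPn_one_le_Suc:
  assumes her: "hereditary r P" and nonempty: "Pn P n \<noteq> {}" and n: "1 \<le> n"
  shows "lamPn 1 Q P n \<le> lamPn 1 Q P (Suc n)"
  unfolding lamPn_def[of _ _ _ n]
proof (rule cSup_least)
  show "{lam 1 Q G | G. G \<in> Pn P n} \<noteq> {}" using nonempty by blast
next
  fix y assume "y \<in> {lam 1 Q G | G. G \<in> Pn P n}"
  then obtain G where y: "y = lam 1 Q G" and G: "G \<in> Pn P n" by blast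
  obtain v where v: "v \<notin> fst G" and G': "(insert v (fst G), snd G) \<in> Pn P (Suc n)"
    using hereditary_add_vertex[OF her G] .
  have "G \<in> P" "card (fst G) = n" using G by (simp_all add: Pn_def)
  then have "finite (fst G)" "fst G \<noteq> {}" using hereditary_finite[OF her] n by auto
  then have "y \<le> lam 1 Q (insert v (fst G), snd G)"
    unfolding y using v by (rule lam_one_add_isolated_vertex)
  also have "\<dots> \<le> lamPn 1 Q P (Suc n)"
    using her G' by (rule lam_one_le_lamPn_one) simp
  finally show "y \<le> lamPn 1 Q P (Suc n)" .
qed

lemma lamP_one_eq_lim: "lamP 1 Q P = lim (lamPn 1 Q P)"
proof -
  \<comment> \<open>the normalising factor \<open>n powr 0\<close> is 1 only for \<open>n > 0\<close>, since \<open>0 powr 0 = 0\<close>\<close>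
  have "\<forall>\<^sub>F n in sequentially.
      lamPn 1 Q P n * real n powr (real (card (fst Q)) / 1 - real (card (fst Q))) = lamPn 1 Q P n"
    using eventually_gt_at_top[of 0] by eventually_elim simp
  then show ?thesis unfolding lamP_def lim_def by (subst tendsto_cong) auto
qed

lemma lam_one_le_lamP_one:
  assumes her: "hereditary r P" and H: "H \<in> P" and nonempty: "fst H \<noteq> {}"
  shows "lam 1 Q H \<le> lamP 1 Q P"
proof -
  define m where "m = card (fst H)"
  have m: "1 \<le> m"
    using hereditary_finite[OF her H] nonempty by (simp add: m_def Suc_le_eq card_gt_0_iff)
  have populated: "Pn P (k + m) \<noteq> {}" for k
    using Pn_nonempty[OF her H] by (simp add: m_def)
  define g where "g k = lamPn 1 Q P (k + m)" for k
  have "incseq g"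
    unfolding g_def using lamPn_one_le_Suc[OF her populated] m by (intro incseq_SucI) simp
  moreover have "g k \<le> simplex_bound (card (fst Q))" for k
    unfolding g_def using lamPn_one_le_simplex_bound[OF her populated] m by simp
  ultimately obtain L where "g \<longlonglongrightarrow> L" "\<And>k. g k \<le> L"
    using incseq_convergent[of g] by metis
  have "lamPn 1 Q P \<longlonglongrightarrow> L"
    using \<open>g \<longlonglongrightarrow> L\<close> unfolding g_def by (rule LIMSEQ_offset)
  then have "lamP 1 Q P = L"
    unfolding lamP_one_eq_lim by (rule limI)
  have "H \<in> Pn P m" using H by (simp add: Pn_def m_def)
  then have "lam 1 Q H \<le> g 0"
    unfolding g_def using lam_one_le_lamPn_one[OF her _ m] by simp
  also have "\<dots> \<le> L" by fact
  finally show ?thesis using \<open>lamP 1 Q P = L\<close> by simp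
qed

theorem theorem3p12:
  fixes r s :: nat and Q :: hgraph and P :: "hgraph set"
  assumes "2 \<le> r" and "r \<le> s"
    and "rgraph r Q" and "card (fst Q) = s"
    and "hereditary r P" and "flat Q P"
  shows "\<forall>n \<ge> s. \<forall>H \<in> Pn P n.
           real (ncopies Q H) \<le> piQ Q P * real n ^ s / fact s \<and>
           (\<forall>p::real. p \<ge> 1 \<longrightarrow> lam p Q H \<le> piQ Q P * real n powr (real s - real s / p))"
proof (intro allI impI ballI conjI)
  fix n H assume "s \<le> n" "H \<in> Pn P n"
  then have H: "H \<in> P" "card (fst H) = n" by (simp_all add: Pn_def)
  have fin: "finite (fst H)" using assms(5) H(1) by (rule hereditary_finite)
  have nonempty: "fst H \<noteq> {}" using H(2) \<open>s \<le> n\<close> assms(1,2) by auto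
  have lam_one: "lam 1 Q H \<le> piQ Q P"
    using lam_one_le_lamP_one[OF assms(5) H(1) nonempty, where Q = Q] assms(6)
    by (simp add: flat_def)
  have "fact s * real (ncopies Q H) \<le> piQ Q P * real n ^ s"
    using fact_mult_ncopies_le_lam_one[OF fin nonempty, of Q]
      mult_right_mono[OF lam_one, of "real n ^ s"]
    by (simp add: assms(4) H(2))
  then show "real (ncopies Q H) \<le> piQ Q P * real n ^ s / fact s"
    by (simp add: field_simps)
  fix p :: real assume "1 \<le> p"
  show "lam p Q H \<le> piQ Q P * real n powr (real s - real s / p)"
    using lam_le_lam_one[OF fin nonempty \<open>1 \<le> p\<close>, of Q]
      mult_right_mono[OF lam_one, of "real n powr (real s - real s / p)"]
    by (simp add: assms(4) H(2))
qed

end
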